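(* Assume (A7). Consider Algorithm 2 with parameter choice (P2) and with $\rho>0$ small enough that $2\rho^2\|(A^TA)^2\|<1$. Then there is a constant $C_1>0$ (independent of $s$, $k$, $S$, $K$) such that for every stage $s\ge1$ and every inner iteration $k$ of that stage, $$\|x^{k+1}-x^k\|\le\frac{C_1}{\sqrt s}.$$
   Context: Standing setup. Let $n,m,p,q,r,l\ge1$. For $j\in\{1,\dots,m\}$ let $g_j:\mathbb R^q\to\mathbb R^r$ be continuously differentiable with Jacobian $\partial g_j(x)\in\mathbb R^{r\times q}$; for $i\in\{1,\dots,n\}$ let $f_i:\mathbb R^r\to\mathbb R$ be continuously differentiable. Set $g(x)=\frac1m\sum_{j=1}^m g_j(x)$, $F_i(x)=f_i(g(x))$, $F(x)=\frac1n\sum_{i=1}^nF_i(x)$. Let $R:\mathbb R^l\to\mathbb R$ be closed convex, $A\in\mathbb R^{p\times q}$, $B\in\mathbb R^{p\times l}$. $\|\cdot\|$ is the Euclidean norm on vectors and spectral norm on matrices; for positive definite $H$, $\|x\|_H^2=x^THx$. Assumption (A7). The gradients of all $f_i$ and $F_i$, the Jacobians of all $g_j$, and the subgradients of $R$ are uniformly bounded, with $\|\nabla F_i(x)\|\le C_F$ for all $i,x$; $B$ is square and invertible. Algorithm 2 (inputs: integers $S,K\ge1$, $\rho>0$, stepsizes $\eta_s>0$, matrices $G_k$ per stage as below; initial $\tilde x^0=\hat x^0$, $\hat\omega^0$, $\hat\lambda^0$, $\hat G^0=I$). For $s=1,\dots,S$: set $\tilde x=\tilde x^{s-1}$, $x^0=\hat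 x^{s-1}$, $\omega^0=\hat\omega^{s-1}$, $\lambda^0=\hat\lambda^{s-1}$, $G_0=\hat G^{s-1}$; compute $g(\tilde x)$, $\nabla F(\tilde x)$. For $k=0,\dots,K-1$: (a) $\omega^{k+1}\in\arg\min_\omega R(\omega)+\langle\lambda^k,B\omega\rangle+\frac\rho2\|Ax^k+B\omega\|^2$; (b) compute $g(x^k)$ exactly; (c) draw $i_k$ uniform on $\{1,\dots,n\}$ and $j_k$ uniform on $\{1,\dots,m\}$, independently, and set $\nabla\hat F_{i_k}(x^k)=(\partial g_{j_k}(x^k))^T\nabla f_{i_k}(g(x^k))-(\partial g_{j_k}(\tilde x))^T\nabla f_{i_k}(g(\tilde x))+\nabla F(\tilde x)$; (d) $x^{k+1}=\arg\min_x\langle\nabla\hat F_{i_k}(x^k),x-x^k\rangle+\langle\lambda^k,Ax\rangle+\frac\rho2\|Ax+B\omega^{k+1}\|^2+\frac1{2\eta_s}\|x-x^k\|_{G_k}^2$; (e) $\lambda^{k+1}=\lambda^k+\rho(Ax^{k+1}+B\omega^{k+1})$. End of stage $s$: $\tilde x^s=\frac1K\sum_{k=1}^Kx^k$, $\tilde\omega^s=\frac1K\sum_{k=1}^K\omega^k$, $\hat x^s=x^K$, $\hat\omega^s=\omega^K$, $\hat\lambda^s=\lambda^K$, $\hat G^s=G_K$. Parameter choice (P2): $\eta_s=\frac1{s+1}$, and in stage $s$ the matrices $G_0,\dots,G_K$ are scalar multiples of the identity with $\frac1{\sqrt s}I=G_0\succeq G_1\succeq\dots\succeq G_{K-1}=G_K=\frac1{\sqrt{s+1}}I$.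 *)

theory Defs
  imports "HOL-Analysis.Analysis"
begin

definition specnorm :: "real^'n^'m \<Rightarrow> real" where
  "specnorm M = onorm (\<lambda>v. M *v v)"

definition is_subgradient :: "(real^'l \<Rightarrow> real) \<Rightarrow> real^'l \<Rightarrow> real^'l \<Rightarrow> bool" where
  "is_subgradient R w \<xi> \<longleftrightarrow> (\<forall>v. R w + \<xi> \<bullet> (v - w) \<le> R v)"

definition closed_convex_fun :: "(real^'l \<Rightarrow> real) \<Rightarrow> bool" where
  "closed_convex_fun R \<longleftrightarrow> convex_on UNIV R \<and> closed {p. R (fst p) \<le> snd p}"

definition g_avg :: "nat \<Rightarrow> (nat \<Rightarrow> real^'q \<Rightarrow> real^'r) \<Rightarrow> real^'q \<Rightarrow> real^'r" where
  "g_avg m g x = (1 / real m) *\<^sub>R (\<Sum>j<m. g j x)"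

definition Jg_avg :: "nat \<Rightarrow> (nat \<Rightarrow> real^'q \<Rightarrow> real^'q^'r) \<Rightarrow> real^'q \<Rightarrow> real^'q^'r" where
  "Jg_avg m Jg x = (1 / real m) *\<^sub>R (\<Sum>j<m. Jg j x)"

text \<open>Gradient of F_i = f_i o g (chain rule): (dg(x))^T grad f_i(g(x)).\<close>
definition gradFi :: "nat \<Rightarrow> (nat \<Rightarrow> real^'q \<Rightarrow> real^'r) \<Rightarrow> (nat \<Rightarrow> real^'q \<Rightarrow> real^'q^'r)
    \<Rightarrow> (nat \<Rightarrow> real^'r \<Rightarrow> real^'r) \<Rightarrow> nat \<Rightarrow> real^'q \<Rightarrow> real^'q" where
  "gradFi m g Jg gf i x = transpose (Jg_avg m Jg x) *v gf i (g_avg m g x)"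

definition gradF :: "nat \<Rightarrow> nat \<Rightarrow> (nat \<Rightarrow> real^'q \<Rightarrow> real^'r) \<Rightarrow> (nat \<Rightarrow> real^'q \<Rightarrow> real^'q^'r)
    \<Rightarrow> (nat \<Rightarrow> real^'r \<Rightarrow> real^'r) \<Rightarrow> real^'q \<Rightarrow> real^'q" where
  "gradF n m g Jg gf x = (1 / real n) *\<^sub>R (\<Sum>i<n. gradFi m g Jg gf i x)"

text \<open>Reference point of stage s: tilde x^{s-1}; tilde x^0 = hat x^0 = x(1,0),
  tilde x^s = (1/K) sum_{k=1..K} x(s,k).\<close>
definition xtil :: "(nat \<Rightarrow> nat \<Rightarrow> real^'q) \<Rightarrow> nat \<Rightarrow> nat \<Rightarrow> real^'q" where
  "xtil x K s = (if s = 0 then x 1 0 else (1 / real K) *\<^sub>R (\<Sum>k\<in>{1..K}. x s k))"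

definition eta :: "nat \<Rightarrow> real" where
  "eta s = 1 / (real s + 1)"

definition grad_est :: "nat \<Rightarrow> nat \<Rightarrow> (nat \<Rightarrow> real^'q \<Rightarrow> real^'r) \<Rightarrow> (nat \<Rightarrow> real^'q \<Rightarrow> real^'q^'r)
    \<Rightarrow> (nat \<Rightarrow> real^'r \<Rightarrow> real^'r) \<Rightarrow> real^'q \<Rightarrow> nat \<Rightarrow> nat \<Rightarrow> real^'q \<Rightarrow> real^'q" where
  "grad_est n m g Jg gf xt i j xk =
     transpose (Jg j xk) *v gf i (g_avg m g xk)
   - transpose (Jg j xt) *v gf i (g_avg m g xt)
   + gradF n m g Jg gf xt"

text \<open>A (any) run of Algorithm 2 with parameter choice (P2), for S stages of K inner steps,
  for an arbitrary realization ii, jj of the sampled indices.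
  Iterates of stage s: x s k, w s k (omega), lam s k (lambda), G_k = gam s k * I.\<close>
definition alg2_run ::
  "nat \<Rightarrow> nat \<Rightarrow> (nat \<Rightarrow> real^'q \<Rightarrow> real^'r) \<Rightarrow> (nat \<Rightarrow> real^'q \<Rightarrow> real^'q^'r)
   \<Rightarrow> (nat \<Rightarrow> real^'r \<Rightarrow> real^'r) \<Rightarrow> (real^'l \<Rightarrow> real) \<Rightarrow> real^'q^'l \<Rightarrow> real^'l^'l \<Rightarrow> real
   \<Rightarrow> nat \<Rightarrow> nat \<Rightarrow> (nat \<Rightarrow> nat \<Rightarrow> real^'q) \<Rightarrow> (nat \<Rightarrow> nat \<Rightarrow> real^'l) \<Rightarrow> (nat \<Rightarrow> nat \<Rightarrow> real^'l)
   \<Rightarrow> (nat \<Rightarrow> nat \<Rightarrow> real) \<Rightarrow> (nat \<Rightarrow> nat \<Rightarrow> nat) \<Rightarrow> (nat \<Rightarrow> nat \<Rightarrow> nat) \<Rightarrow> bool" where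
  "alg2_run n m g Jg gf R A B \<rho> S K x w lam gam ii jj \<longleftrightarrow>
     K \<ge> 1 \<and>
     \<comment> \<open>warm start: x^0 = hat x^{s-1} = x^K of previous stage, etc.\<close>
     (\<forall>s\<in>{1..<S}. x (Suc s) 0 = x s K \<and> w (Suc s) 0 = w s K \<and> lam (Suc s) 0 = lam s K) \<and>
     \<comment> \<open>(P2): G matrices\<close>
     (\<forall>s\<in>{1..S}. gam s 0 = 1 / sqrt (real s) \<and> (\<forall>k<K. gam s (Suc k) \<le> gam s k)
        \<and> gam s (K - 1) = 1 / sqrt (real s + 1) \<and> gam s K = 1 / sqrt (real s + 1)) \<and>
     (\<forall>s\<in>{1..S}. \<forall>k<K.
        \<comment> \<open>(a) omega update\<close>
        (\<forall>\<omega>. R (w s (Suc k)) + lam s k \<bullet> (B *v w s (Suc k))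
                + \<rho> / 2 * (norm (A *v x s k + B *v w s (Suc k)))\<^sup>2
              \<le> R \<omega> + lam s k \<bullet> (B *v \<omega>) + \<rho> / 2 * (norm (A *v x s k + B *v \<omega>))\<^sup>2) \<and>
        \<comment> \<open>(c) sampled indices\<close>
        ii s k < n \<and> jj s k < m \<and>
        \<comment> \<open>(d) x update\<close>
        (let v = grad_est n m g Jg gf (xtil x K (s - 1)) (ii s k) (jj s k) (x s k);
             \<phi> = (\<lambda>z. v \<bullet> (z - x s k) + lam s k \<bullet> (A *v z)
                     + \<rho> / 2 * (norm (A *v z + B *v w s (Suc k)))\<^sup>2
                     + 1 / (2 * eta s) * (gam s k * (norm (z - x s k))\<^sup>2))
         in \<forall>z. \<phi> (x s (Suc k)) \<le> \<phi> z) \<and>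
        \<comment> \<open>(e) multiplier update\<close>
        lam s (Suc k) = lam s k + \<rho> *\<^sub>R (A *v x s (Suc k) + B *v w s (Suc k)))"

end

theory Submission
  imports Defs
begin

text \<open>
  Both subproblems of an inner iteration are solved exactly, so their first-order optimality
  conditions hold. For the \<open>\<omega>\<close>-update this says that \<open>-B\<^sup>T\<mu>\<close> is a subgradient of \<open>R\<close>, where
  \<open>\<mu> = \<lambda>\<^sup>k + \<rho>(Ax\<^sup>k + B\<omega>\<^sup>k\<^sup>+\<^sup>1)\<close>; hence \<open>B\<^sup>T\<mu>\<close> is bounded, and since \<open>B\<close> is invertible so is
  \<open>A\<^sup>T\<mu>\<close>. For the \<open>x\<close>-update, testing the vanishing gradient against \<open>d = x\<^sup>k\<^sup>+\<^sup>1 - x\<^sup>k\<close> gives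
  \<open>(\<gamma>\<^sub>k/\<eta>\<^sub>s)\<parallel>d\<parallel>\<^sup>2 \<le> -(v + A\<^sup>T\<mu>)\<cdot>d\<close> with the bounded gradient estimate \<open>v\<close>, so
  \<open>\<parallel>d\<parallel> \<le> \<parallel>v + A\<^sup>T\<mu>\<parallel> \<eta>\<^sub>s/\<gamma>\<^sub>k\<close>, and \<open>\<gamma>\<^sub>k/\<eta>\<^sub>s \<ge> (s+1)/\<surd>(s+1) \<ge> \<surd>s\<close> under (P2).
\<close>

lemma nonneg_if_quadratic_nonneg:
  fixes a b :: real
  assumes "\<And>t. 0 < t \<Longrightarrow> t \<le> 1 \<Longrightarrow> 0 \<le> t * a + t\<^sup>2 * b"
  shows "0 \<le> a"
proof (rule tendsto_lowerbound)
  show "((\<lambda>t. a + t * b) \<longlongrightarrow> a) (at_right 0)"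
    by (auto intro!: tendsto_eq_intros)
  have "0 \<le> a + t * b" if "0 < t" "t < 1" for t :: real
  proof -
    have "0 \<le> t * (a + t * b)"
      using assms[of t] that by (simp add: power2_eq_square algebra_simps)
    with \<open>0 < t\<close> show ?thesis
      by (simp add: zero_le_mult_iff)
  qed
  then show "\<forall>\<^sub>F t in at_right 0. 0 \<le> a + t * b"
    unfolding eventually_at_right_field by (auto intro!: exI[of _ 1])
qed simp

lemma norm_add_scaleR_square:
  fixes p q :: "'a::real_inner"
  shows "(norm (p + t *\<^sub>R q))\<^sup>2 = (norm p)\<^sup>2 + 2 * t * (p \<bullet> q) + t\<^sup>2 * (norm q)\<^sup>2"
  unfolding power2_norm_eq_inner
  by (simp add: inner_add_left inner_add_right inner_commute power2_eq_square algebra_simps)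

lemma inner_matrix_vector_transpose:
  fixes A :: "real^'n^'m"
  shows "y \<bullet> (A *v z) = (transpose A *v y) \<bullet> z"
  by (simp add: dot_lmul_matrix)

lemma subgradient_of_augmented_minimizer:
  fixes B :: "real^'l^'p" and c :: "real^'p"
  assumes min: "\<And>\<omega>. R w + lam \<bullet> (B *v w) + \<rho> / 2 * (norm (c + B *v w))\<^sup>2
                   \<le> R \<omega> + lam \<bullet> (B *v \<omega>) + \<rho> / 2 * (norm (c + B *v \<omega>))\<^sup>2"
    and cvx: "convex_on UNIV R"
  shows "is_subgradient R w (- (transpose B *v (lam + \<rho> *\<^sub>R (c + B *v w))))"
  unfolding is_subgradient_def
proof
  fix u
  define P where "P = c + B *v w"
  define q where "q = B *v (u - w)"
  have "0 \<le> t * (R u - R w + lam \<bullet> q + \<rho> * (P \<bullet> q)) + t\<^sup>2 * (\<rho> / 2 * (norm q)\<^sup>2)"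
    if t: "0 < t" "t \<le> 1" for t
  proof -
    have Rz: "R ((1 - t) *\<^sub>R w + t *\<^sub>R u) \<le> (1 - t) * R w + t * R u"
      using cvx t unfolding convex_on_def by auto
    have Bz: "B *v ((1 - t) *\<^sub>R w + t *\<^sub>R u) = B *v w + t *\<^sub>R q"
      by (simp add: q_def matrix_vector_mult_diff_distrib matrix_vector_right_distrib
          matrix_vector_mult_scaleR algebra_simps)
    have Pz: "c + B *v ((1 - t) *\<^sub>R w + t *\<^sub>R u) = P + t *\<^sub>R q"
      by (simp add: Bz P_def add.assoc)
    have "R w + lam \<bullet> (B *v w) + \<rho> / 2 * (norm P)\<^sup>2
        \<le> R ((1 - t) *\<^sub>R w + t *\<^sub>R u) + lam \<bullet> (B *v w) + t * (lam \<bullet> q)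
           + \<rho> / 2 * ((norm P)\<^sup>2 + 2 * t * (P \<bullet> q) + t\<^sup>2 * (norm q)\<^sup>2)"
      using min[of "(1 - t) *\<^sub>R w + t *\<^sub>R u"] unfolding Pz norm_add_scaleR_square
      by (simp add: Bz P_def inner_add_right)
    with Rz show ?thesis by (simp add: algebra_simps)
  qed
  then have "0 \<le> R u - R w + lam \<bullet> q + \<rho> * (P \<bullet> q)"
    by (rule nonneg_if_quadratic_nonneg)
  moreover have "(transpose B *v (lam + \<rho> *\<^sub>R P)) \<bullet> (u - w) = lam \<bullet> q + \<rho> * (P \<bullet> q)"
    unfolding q_def
    by (simp only: inner_matrix_vector_transpose[symmetric] inner_add_left inner_scaleR_left)
  ultimately show "R w + - (transpose B *v (lam + \<rho> *\<^sub>R (c + B *v w))) \<bullet> (u - w) \<le> R u"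
    unfolding P_def by simp
qed

lemma augmented_prox_minimizer_gradient_eq_0:
  fixes A :: "real^'q^'p" and c :: "real^'p"
  assumes min: "\<And>z. v \<bullet> (x - x0) + lam \<bullet> (A *v x) + \<rho> / 2 * (norm (A *v x + c))\<^sup>2
                      + a * (norm (x - x0))\<^sup>2
                   \<le> v \<bullet> (z - x0) + lam \<bullet> (A *v z) + \<rho> / 2 * (norm (A *v z + c))\<^sup>2
                      + a * (norm (z - x0))\<^sup>2"
  shows "v + transpose A *v (lam + \<rho> *\<^sub>R (A *v x + c)) + (2 * a) *\<^sub>R (x - x0) = 0"
    (is "?G = 0")
proof -
  have "0 \<le> ?G \<bullet> u" for u
  proof -
    define Du where "Du = v \<bullet> u + lam \<bullet> (A *v u) + \<rho> * ((A *v x + c) \<bullet> (A *v u))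
      + 2 * a * ((x - x0) \<bullet> u)"
    have "0 \<le> t * Du + t\<^sup>2 * (\<rho> / 2 * (norm (A *v u))\<^sup>2 + a * (norm u)\<^sup>2)" for t
    proof -
      have Az: "A *v (x + t *\<^sub>R u) + c = (A *v x + c) + t *\<^sub>R (A *v u)"
        by (simp add: matrix_vector_right_distrib matrix_vector_mult_scaleR)
      have xz: "x + t *\<^sub>R u - x0 = (x - x0) + t *\<^sub>R u"
        by simp
      from min[of "x + t *\<^sub>R u"] show ?thesis
        unfolding Az xz norm_add_scaleR_square Du_def
        by (simp add: inner_add_right inner_diff_right matrix_vector_right_distrib
            matrix_vector_mult_scaleR algebra_simps power2_eq_square)
    qed
    then have "0 \<le> Du"
      by (rule nonneg_if_quadratic_nonneg)
    also have "Du = ?G \<bullet> u"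
      unfolding Du_def
      by (simp only: inner_add_left inner_scaleR_left inner_matrix_vector_transpose[symmetric])
    finally show ?thesis .
  qed
  from this[of "- ?G"] have "?G \<bullet> ?G \<le> 0"
    by (simp only: inner_minus_right neg_0_le_iff_le)
  then have "?G \<bullet> ?G = 0"
    using inner_ge_zero[of ?G] by linarith
  then show ?thesis
    by (simp only: inner_eq_zero_iff)
qed

lemma augmented_prox_step_le:
  fixes A :: "real^'q^'p" and c :: "real^'p"
  assumes min: "\<And>z. v \<bullet> (x - x0) + lam \<bullet> (A *v x) + \<rho> / 2 * (norm (A *v x + c))\<^sup>2
                      + a * (norm (x - x0))\<^sup>2
                   \<le> v \<bullet> (z - x0) + lam \<bullet> (A *v z) + \<rho> / 2 * (norm (A *v z + c))\<^sup>2
                      + a * (norm (z - x0))\<^sup>2"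
    and "0 \<le> \<rho>"
  shows "2 * a * (norm (x - x0))\<^sup>2 \<le> - ((v + transpose A *v (lam + \<rho> *\<^sub>R (A *v x0 + c))) \<bullet> (x - x0))"
proof -
  define d where "d = x - x0"
  have Ax: "A *v x + c = (A *v x0 + c) + A *v d"
    by (simp add: d_def matrix_vector_mult_diff_distrib)
  have "(v + transpose A *v (lam + \<rho> *\<^sub>R (A *v x + c)) + (2 * a) *\<^sub>R d) \<bullet> d = 0"
    using augmented_prox_minimizer_gradient_eq_0[OF min] by (simp add: d_def)
  then have "(v + transpose A *v (lam + \<rho> *\<^sub>R (A *v x0 + c))) \<bullet> d + \<rho> * (norm (A *v d))\<^sup>2
      + 2 * a * (norm d)\<^sup>2 = 0"
    unfolding Ax
    by (simp add: inner_add_left inner_matrix_vector_transpose power2_norm_eq_inner algebra_simps)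
  with \<open>0 \<le> \<rho>\<close> show ?thesis
    unfolding d_def by (smt (verit) zero_le_mult_iff zero_le_power2)
qed

lemma norm_le_divide_if_square_le_inner:
  fixes d y :: "'a::real_inner"
  assumes "c * (norm d)\<^sup>2 \<le> - (y \<bullet> d)" "norm y \<le> W" "0 < c"
  shows "norm d \<le> W / c"
proof -
  have "- (y \<bullet> d) \<le> norm y * norm d"
    using norm_cauchy_schwarz[of "- y" d] by simp
  also have "\<dots> \<le> W * norm d"
    by (rule mult_right_mono[OF assms(2) norm_ge_zero])
  finally have "c * (norm d * norm d) \<le> W * norm d"
    using assms(1) by (simp add: power2_eq_square)
  moreover have "0 \<le> W"
    using assms(2) norm_ge_zero order_trans by blast
  ultimately have "c * norm d \<le> W"
    by (cases "norm d = 0") (auto simp: mult.assoc[symmetric])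
  with \<open>0 < c\<close> show ?thesis
    by (simp add: pos_le_divide_eq mult.commute)
qed

lemma norm_matrix_vector_le_specnorm: "norm ((M::real^'n^'m) *v z) \<le> specnorm M * norm z"
  unfolding specnorm_def by (rule onorm) simp

lemma specnorm_nonneg: "0 \<le> specnorm (M::real^'n^'m)"
  unfolding specnorm_def by (rule onorm_pos_le) simp

lemma norm_transpose_vector_le_specnorm:
  "norm (transpose (M::real^'n^'m) *v y) \<le> specnorm M * norm y"
proof -
  define u where "u = transpose M *v y"
  have "norm u * norm u = y \<bullet> (M *v u)"
    by (simp add: u_def inner_matrix_vector_transpose flip: power2_norm_eq_inner power2_eq_square)
  also have "\<dots> \<le> norm y * (specnorm M * norm u)"
    using norm_cauchy_schwarz order_trans mult_left_mono norm_matrix_vector_le_specnorm norm_ge_zero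
    by metis
  finally have "norm u * norm u \<le> (specnorm M * norm y) * norm u"
    by (simp add: mult_ac)
  then show ?thesis
    using specnorm_nonneg[of M] by (cases "norm u = 0") (auto simp: u_def)
qed

lemma norm_transpose_le_invertible_transpose:
  fixes A :: "real^'q^'l" and B :: "real^'l^'l"
  assumes "invertible B"
  obtains K where "0 \<le> K" "\<And>y. norm (transpose A *v y) \<le> K * norm (transpose B *v y)"
proof -
  obtain Bi where Bi: "Bi ** transpose B = mat 1"
    using transpose_invertible[OF assms] unfolding invertible_def by blast
  have "norm (transpose A *v y) \<le> specnorm (transpose A ** Bi) * norm (transpose B *v y)" for y
  proof -
    have "transpose A *v y = (transpose A ** Bi) *v (transpose B *v y)"
      by (metis matrix_vector_mul_assoc matrix_mul_assoc Bi matrix_mul_rid)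
    then show ?thesis
      by (metis norm_matrix_vector_le_specnorm)
  qed
  with specnorm_nonneg that show ?thesis
    by blast
qed

lemma norm_gradF_le:
  assumes "1 \<le> n" "\<And>i x. i < n \<Longrightarrow> norm (gradFi m g Jg gf i x) \<le> CF"
  shows "norm (gradF n m g Jg gf x) \<le> CF"
proof -
  have "norm (\<Sum>i<n. gradFi m g Jg gf i x) \<le> (\<Sum>i<n. norm (gradFi m g Jg gf i x))"
    by (rule norm_sum)
  also have "\<dots> \<le> (\<Sum>i<n. CF)"
    by (rule sum_mono) (simp add: assms(2))
  finally have "norm (\<Sum>i<n. gradFi m g Jg gf i x) \<le> real n * CF"
    by simp
  with assms(1) show ?thesis
    by (simp add: gradF_def divide_le_eq mult.commute)
qed

lemma norm_grad_est_le:
  assumes "1 \<le> n" "i < n" "j < m"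
    and Lf: "\<And>i y. i < n \<Longrightarrow> norm (gf i y) \<le> Lf"
    and LJ: "\<And>j x. j < m \<Longrightarrow> specnorm (Jg j x) \<le> LJ"
    and CF: "\<And>i x. i < n \<Longrightarrow> norm (gradFi m g Jg gf i x) \<le> CF"
  shows "norm (grad_est n m g Jg gf xt i j x) \<le> 2 * LJ * Lf + CF"
proof -
  have term_le: "norm (transpose (Jg j y) *v gf i z) \<le> LJ * Lf" for y z
    using norm_transpose_vector_le_specnorm[of "Jg j y" "gf i z"]
      mult_mono[OF LJ[OF \<open>j < m\<close>] Lf[OF \<open>i < n\<close>]]
      order_trans[OF specnorm_nonneg LJ[OF \<open>j < m\<close>]]
    by (simp add: mult_mono order_trans)
  have "norm (grad_est n m g Jg gf xt i j x)
      \<le> norm (transpose (Jg j x) *v gf i (g_avg m g x))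
        + norm (transpose (Jg j xt) *v gf i (g_avg m g xt)) + norm (gradF n m g Jg gf xt)"
    unfolding grad_est_def by (meson norm_triangle_ineq norm_triangle_ineq4 add_right_mono order_trans)
  moreover have "norm (gradF n m g Jg gf xt) \<le> CF"
    by (rule norm_gradF_le) (use assms in auto)
  ultimately show ?thesis
    using term_le[of x "g_avg m g x"] term_le[of xt "g_avg m g xt"] by linarith
qed

lemma alg2_run_stepD:
  assumes run: "alg2_run n m g Jg gf R A B \<rho> S K x w lam gam ii jj"
    and s: "s \<in> {1..S}" and k: "k < K"
  shows "ii s k < n" "jj s k < m"
    and "\<And>\<omega>. R (w s (Suc k)) + lam s k \<bullet> (B *v w s (Suc k))
                + \<rho> / 2 * (norm (A *v x s k + B *v w s (Suc k)))\<^sup>2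
              \<le> R \<omega> + lam s k \<bullet> (B *v \<omega>) + \<rho> / 2 * (norm (A *v x s k + B *v \<omega>))\<^sup>2"
    and "\<And>z. let v = grad_est n m g Jg gf (xtil x K (s - 1)) (ii s k) (jj s k) (x s k) in
           v \<bullet> (x s (Suc k) - x s k) + lam s k \<bullet> (A *v x s (Suc k))
             + \<rho> / 2 * (norm (A *v x s (Suc k) + B *v w s (Suc k)))\<^sup>2
             + gam s k / (2 * eta s) * (norm (x s (Suc k) - x s k))\<^sup>2
           \<le> v \<bullet> (z - x s k) + lam s k \<bullet> (A *v z) + \<rho> / 2 * (norm (A *v z + B *v w s (Suc k)))\<^sup>2
             + gam s k / (2 * eta s) * (norm (z - x s k))\<^sup>2"
    and "1 / sqrt (real s + 1) \<le> gam s k"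
proof -
  have stage: "\<forall>k<K. gam s (Suc k) \<le> gam s k" "gam s (K - 1) = 1 / sqrt (real s + 1)"
    using run s unfolding alg2_run_def by blast+
  have "gam s (K - 1) \<le> gam s k"
    by (rule lift_Suc_antimono_le_ivl[of "{..<K}"]) (use stage(1) k in auto)
  with stage(2) show "1 / sqrt (real s + 1) \<le> gam s k"
    by simp
qed (use run s k in \<open>auto simp: alg2_run_def Let_def mult.assoc\<close>)

lemma sqrt_le_stage_weight:
  assumes "1 / sqrt (real s + 1) \<le> \<gamma>"
  shows "sqrt (real s) \<le> 2 * (\<gamma> / (2 * eta s))"
proof -
  have "sqrt (real s) \<le> (real s + 1) / sqrt (real s + 1)"
    by (simp add: real_div_sqrt)
  also have "\<dots> \<le> (real s + 1) * \<gamma>"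
    using mult_left_mono[OF assms, of "real s + 1"] by simp
  finally show ?thesis
    by (simp add: eta_def mult.commute)
qed

lemma alg2_run_step_le:
  assumes run: "alg2_run n m g Jg gf R A B \<rho> S K x w lam gam ii jj"
    and s: "s \<in> {1..S}" and k: "k < K"
    and "1 \<le> n" "convex_on UNIV R" "0 \<le> \<rho>"
    and Lf: "\<And>i y. i < n \<Longrightarrow> norm (gf i y) \<le> Lf"
    and LJ: "\<And>j x. j < m \<Longrightarrow> specnorm (Jg j x) \<le> LJ"
    and CF: "\<And>i x. i < n \<Longrightarrow> norm (gradFi m g Jg gf i x) \<le> CF"
    and LR: "\<And>w \<xi>. is_subgradient R w \<xi> \<Longrightarrow> norm \<xi> \<le> LR"
    and AB: "\<And>y. norm (transpose A *v y) \<le> KAB * norm (transpose B *v y)" "0 \<le> KAB"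
  shows "norm (x s (Suc k) - x s k) \<le> (2 * LJ * Lf + CF + KAB * LR) / sqrt (real s)"
proof -
  note step = alg2_run_stepD[OF run s k]
  define v where "v = grad_est n m g Jg gf (xtil x K (s - 1)) (ii s k) (jj s k) (x s k)"
  define \<mu> where "\<mu> = lam s k + \<rho> *\<^sub>R (A *v x s k + B *v w s (Suc k))"
  define W where "W = 2 * LJ * Lf + CF + KAB * LR"
  have "norm (transpose B *v \<mu>) \<le> LR"
    using LR[OF subgradient_of_augmented_minimizer[OF step(3) \<open>convex_on UNIV R\<close>]]
    by (simp add: \<mu>_def)
  then have "norm (transpose A *v \<mu>) \<le> KAB * LR"
    by (meson AB mult_left_mono order_trans)
  moreover have "norm v \<le> 2 * LJ * Lf + CF"
    unfolding v_def by (rule norm_grad_est_le[OF \<open>1 \<le> n\<close> step(1,2) Lf LJ CF])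
  ultimately have W: "norm (v + transpose A *v \<mu>) \<le> W"
    unfolding W_def by (smt (verit) norm_triangle_ineq)
  have x_step: "2 * (gam s k / (2 * eta s)) * (norm (x s (Suc k) - x s k))\<^sup>2
      \<le> - ((v + transpose A *v \<mu>) \<bullet> (x s (Suc k) - x s k))"
    unfolding \<mu>_def
    by (rule augmented_prox_step_le[OF step(4)[unfolded Let_def, folded v_def] \<open>0 \<le> \<rho>\<close>])
  have s_pos: "0 < sqrt (real s)"
    using s by simp
  have weight: "sqrt (real s) \<le> 2 * (gam s k / (2 * eta s))"
    by (rule sqrt_le_stage_weight[OF step(5)])
  then have weight_pos: "0 < 2 * (gam s k / (2 * eta s))"
    using s_pos by linarith
  then have "norm (x s (Suc k) - x s k) \<le> W / (2 * (gam s k / (2 * eta s)))"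
    by (rule norm_le_divide_if_square_le_inner[OF x_step W])
  also have "\<dots> \<le> W / sqrt (real s)"
    by (rule divide_left_mono[OF weight order_trans[OF norm_ge_zero W] mult_pos_pos[OF weight_pos s_pos]])
  finally show ?thesis
    unfolding W_def .
qed

theorem lemma10:
  fixes n m :: nat
    and g :: "nat \<Rightarrow> real^'q \<Rightarrow> real^'r"
    and Jg :: "nat \<Rightarrow> real^'q \<Rightarrow> real^'q^'r"
    and f :: "nat \<Rightarrow> real^'r \<Rightarrow> real"
    and gf :: "nat \<Rightarrow> real^'r \<Rightarrow> real^'r"
    and R :: "real^'l \<Rightarrow> real"
    and A :: "real^'q^'l"
    and B :: "real^'l^'l"
    and \<rho> CF :: real
  assumes n_pos: "n \<ge> 1" and m_pos: "m \<ge> 1"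
    and g_diff: "\<forall>j<m. \<forall>x. (g j has_derivative (\<lambda>h. Jg j x *v h)) (at x)"
    and Jg_cont: "\<forall>j<m. continuous_on UNIV (Jg j)"
    and f_diff: "\<forall>i<n. \<forall>y. (f i has_derivative (\<lambda>h. gf i y \<bullet> h)) (at y)"
    and gf_cont: "\<forall>i<n. continuous_on UNIV (gf i)"
    and R_cc: "closed_convex_fun R"
    and bnd_f: "\<exists>L. \<forall>i<n. \<forall>y. norm (gf i y) \<le> L"
    and bnd_Jg: "\<exists>L. \<forall>j<m. \<forall>x. specnorm (Jg j x) \<le> L"
    and bnd_R: "\<exists>L. \<forall>w \<xi>. is_subgradient R w \<xi> \<longrightarrow> norm \<xi> \<le> L"
    and bnd_F: "\<forall>i<n. \<forall>x. norm (gradFi m g Jg gf i x) \<le> CF"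
    and B_inv: "invertible B"
    and rho_pos: "\<rho> > 0"
    and rho_small: "2 * \<rho>\<^sup>2 * specnorm ((transpose A ** A) ** (transpose A ** A)) < 1"
  shows "\<exists>C1>0. \<forall>S K x w lam gam ii jj.
           alg2_run n m g Jg gf R A B \<rho> S K x w lam gam ii jj \<longrightarrow>
           (\<forall>s\<in>{1..S}. \<forall>k<K. norm (x s (Suc k) - x s k) \<le> C1 / sqrt (real s))"
proof -
  obtain Lf where Lf: "\<forall>i<n. \<forall>y. norm (gf i y) \<le> Lf" using bnd_f by blast
  obtain LJ where LJ: "\<forall>j<m. \<forall>x. specnorm (Jg j x) \<le> LJ" using bnd_Jg by blast
  obtain LR where LR: "\<forall>w \<xi>. is_subgradient R w \<xi> \<longrightarrow> norm \<xi> \<le> LR" using bnd_R by blast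
  obtain KAB where AB: "0 \<le> KAB" "\<And>y. norm (transpose A *v y) \<le> KAB * norm (transpose B *v y)"
    using norm_transpose_le_invertible_transpose[OF B_inv] by blast
  have cvx: "convex_on UNIV R"
    using R_cc unfolding closed_convex_fun_def by blast
  define W where "W = 2 * LJ * Lf + CF + KAB * LR"
  show ?thesis
  proof (intro exI[of _ "max W 1"] conjI allI impI ballI)
    fix S K x w lam gam ii jj s k
    assume run: "alg2_run n m g Jg gf R A B \<rho> S K x w lam gam ii jj" and "s \<in> {1..S}" "k < K"
    have "norm (x s (Suc k) - x s k) \<le> W / sqrt (real s)"
      unfolding W_def using alg2_run_step_le[OF run \<open>s \<in> _\<close> \<open>k < K\<close> n_pos cvx] rho_pos Lf LJ bnd_F LR AB
      by auto
    then show "norm (x s (Suc k) - x s k) \<le> max W 1 / sqrt (real s)"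
      by (smt (verit) divide_right_mono real_sqrt_ge_zero of_nat_0_le_iff)
  qed simp
qed

end
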